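(* Let $\mathcal A$ be an associative unital algebra, $a_1,\dots,a_4\in\mathcal A$ invertible, $A_i=a_ia_{i+1}a_{i+2}a_{i+3}$ (indices mod $4$), with $1+A_i$ invertible for all $i$, and define $$b_1=(1+A_3^{-1})a_3,\quad b_2=(1+A_4)^{-1}a_4,\quad b_3=(1+A_1^{-1})a_1,\quad b_4=(1+A_2)^{-1}a_2.$$ Then in the cyclic quotient of noncommutative differential forms $$\{a_4,a_1\}-\{a_1,a_2\}+\{a_2,a_3\}-\{a_3,a_4\}=\{b_1,b_2\}-\{b_2,b_3\}+\{b_3,b_4\}-\{b_4,b_1\}.$$ Equivalently, the canonical $2$-form $\Omega_\Gamma$ of a decorated bipartite ribbon graph is invariant under two by two moves.
   Context: $\Omega^\bullet\mathcal A$ is the noncommutative de Rham algebra of $\mathcal A$ (generated by $a\in\mathcal A$ in degree $0$ and $da$ in degree $1$, Leibniz rule, $d^2=0$), and the cyclic quotient is $\Omega^\bullet\mathcal A/[\Omega^\bullet\mathcal A,\Omega^\bullet\mathcal A]$ by graded commutators. For invertible $a,b$, $\{a,b\}$ denotes the class of $da\,db\,b^{-1}a^{-1}$. The formulas for $b_i$ describe the change of edge coordinates under a two by two move of bipartite ribbon graphs. *)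

theory Defs
  imports Main "HOL-Library.Poly_Mapping"
begin

definition invertible :: "'a::ring_1 \<Rightarrow> bool" where
  "invertible a \<longleftrightarrow> (\<exists>x. a * x = 1 \<and> x * a = 1)"

definition uinv :: "'a::ring_1 \<Rightarrow> 'a" where
  "uinv a = (SOME x. a * x = 1 \<and> x * a = 1)"

text \<open>Over the ground ring of integers, Omega^2 A is A (x) Abar (x) Abar with Abar = A / Z1;
  the element a0 (x) a1 (x) a2 corresponds to the form a0 da1 da2.\<close>

definition fm :: "'a \<Rightarrow> 'a \<Rightarrow> 'a \<Rightarrow> ('a \<times> 'a \<times> 'a) \<Rightarrow>\<^sub>0 int" where
  "fm a0 a1 a2 = Poly_Mapping.single (a0, a1, a2) 1"

text \<open>The subgroup of relations: those defining Omega^2 (multilinearity, d1 = 0) together with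
  graded commutators of degree 2, namely [x, a0 da1 da2] for x in Omega^0 and
  [a0 da1, b0 db1] = (a0 da1)(b0 db1) + (b0 db1)(a0 da1), products being put into normal form
  by the Leibniz rule.  Quotienting by it yields Omega^2 A / [Omega A, Omega A] in degree 2.\<close>

inductive_set cyc_rel :: "(('a::ring_1 \<times> 'a \<times> 'a) \<Rightarrow>\<^sub>0 int) set" where
  zero: "0 \<in> cyc_rel"
| diff: "x \<in> cyc_rel \<Longrightarrow> y \<in> cyc_rel \<Longrightarrow> x - y \<in> cyc_rel"
| add0: "fm (a + a') b c - fm a b c - fm a' b c \<in> cyc_rel"
| add1: "fm a (b + b') c - fm a b c - fm a b' c \<in> cyc_rel"
| add2: "fm a b (c + c') - fm a b c - fm a b c' \<in> cyc_rel"
| unit1: "fm a 1 c \<in> cyc_rel"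
| unit2: "fm a b 1 \<in> cyc_rel"
| comm02: "fm (x * a0) a1 a2 - (fm a0 a1 (a2 * x) - fm a0 (a1 * a2) x + fm (a0 * a1) a2 x) \<in> cyc_rel"
| comm11: "fm a0 (a1 * b0) b1 - fm (a0 * a1) b0 b1 + fm b0 (b1 * a0) a1 - fm (b0 * b1) a0 a1 \<in> cyc_rel"

definition cyc_eq :: "(('a::ring_1 \<times> 'a \<times> 'a) \<Rightarrow>\<^sub>0 int) \<Rightarrow> (('a \<times> 'a \<times> 'a) \<Rightarrow>\<^sub>0 int) \<Rightarrow> bool" where
  "cyc_eq x y \<longleftrightarrow> x - y \<in> cyc_rel"

text \<open>The form da db c in normal form: da d(bc) - d(ab) dc + a db dc.\<close>
definition dd_times :: "'a::ring_1 \<Rightarrow> 'a \<Rightarrow> 'a \<Rightarrow> ('a \<times> 'a \<times> 'a) \<Rightarrow>\<^sub>0 int" where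
  "dd_times a b c = fm 1 a (b * c) - fm 1 (a * b) c + fm a b c"

text \<open>{a,b} = da db b^-1 a^-1 (a representative of its class).\<close>
definition curly :: "'a::ring_1 \<Rightarrow> 'a \<Rightarrow> ('a \<times> 'a \<times> 'a) \<Rightarrow>\<^sub>0 int" where
  "curly a b = dd_times a b (uinv b * uinv a)"

end

theory Submission
  imports Defs HOL.Modules
begin

(* Write tr x a y b for the class of x da y db.  It is additive in each argument, obeys the
   Leibniz rule in both differentials and is graded cyclic, tr x a y b = - tr y b x a.  With
   i_k = a_k^-1 and u = (1 + A_1)^-1, the new coordinates b_k and their inverses are
   noncommutative polynomials in the a_k, i_k and u.  Expanding {b, c} = tr (c^-1 b^-1) b 1 c by
   these rules, moving differentials off the i_k and u via d(v^-1) = - v^-1 dv v^-1, and reducing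
   words with u A_1 = 1 - u brings both sides to the same normal form. *)

lemma cyc_rel_uminus: "x \<in> cyc_rel \<Longrightarrow> - x \<in> cyc_rel"
  using cyc_rel.diff[OF cyc_rel.zero] by fastforce

lemma cyc_rel_add: "x \<in> cyc_rel \<Longrightarrow> y \<in> cyc_rel \<Longrightarrow> x + y \<in> cyc_rel"
  using cyc_rel.diff[of x "- y"] cyc_rel_uminus[of y] by simp

lemma equivp_cyc_eq: "equivp cyc_eq"
proof (rule equivpI)
  show "reflp cyc_eq" by (simp add: reflp_def cyc_eq_def cyc_rel.zero)
  show "symp cyc_eq" unfolding symp_def cyc_eq_def by (metis cyc_rel_uminus minus_diff_eq)
  show "transp cyc_eq" unfolding transp_def cyc_eq_def using cyc_rel_add by fastforce
qed

quotient_type (overloaded) 'a cyc_form = "('a::ring_1 \<times> 'a \<times> 'a) \<Rightarrow>\<^sub>0 int" / cyc_eq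
  by (rule equivp_cyc_eq)

instantiation cyc_form :: (ring_1) ab_group_add
begin

lift_definition zero_cyc_form :: "'a cyc_form" is 0 .

lift_definition plus_cyc_form :: "'a cyc_form \<Rightarrow> 'a cyc_form \<Rightarrow> 'a cyc_form" is "(+)"
  unfolding cyc_eq_def using cyc_rel_add by (fastforce simp: algebra_simps)

lift_definition uminus_cyc_form :: "'a cyc_form \<Rightarrow> 'a cyc_form" is uminus
  unfolding cyc_eq_def using cyc_rel_uminus by fastforce

lift_definition minus_cyc_form :: "'a cyc_form \<Rightarrow> 'a cyc_form \<Rightarrow> 'a cyc_form" is "(-)"
  unfolding cyc_eq_def using cyc_rel.diff by (fastforce simp: algebra_simps)

instance
  by standard (transfer; simp add: algebra_simps equivp_reflp[OF equivp_cyc_eq])+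

end

lemmas abs_cyc_form_ops = plus_cyc_form.abs_eq[symmetric] minus_cyc_form.abs_eq[symmetric]

lemma abs_cyc_form_eq_0: "r \<in> cyc_rel \<Longrightarrow> abs_cyc_form r = 0"
  by (simp add: zero_cyc_form_def cyc_eq_def cyc_form.abs_eq_iff)

definition dform :: "'a::ring_1 \<Rightarrow> 'a \<Rightarrow> 'a \<Rightarrow> 'a cyc_form" where
  "dform a0 a1 a2 = abs_cyc_form (fm a0 a1 a2)"

lemma dform_add:
  "dform (a0 + a0') a1 a2 = dform a0 a1 a2 + dform a0' a1 a2"
  "dform a0 (a1 + a1') a2 = dform a0 a1 a2 + dform a0 a1' a2"
  "dform a0 a1 (a2 + a2') = dform a0 a1 a2 + dform a0 a1 a2'"
  using abs_cyc_form_eq_0[OF cyc_rel.add0] abs_cyc_form_eq_0[OF cyc_rel.add1]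
    abs_cyc_form_eq_0[OF cyc_rel.add2]
  by (simp_all add: dform_def abs_cyc_form_ops diff_eq_eq add.commute)

lemma dform_one: "dform a0 1 a2 = 0" "dform a0 a1 1 = 0"
  using abs_cyc_form_eq_0[OF cyc_rel.unit1] abs_cyc_form_eq_0[OF cyc_rel.unit2]
  by (simp_all add: dform_def)

lemma dform_commute_left:
  "dform (x * a0) a1 a2 = dform a0 a1 (a2 * x) - dform a0 (a1 * a2) x + dform (a0 * a1) a2 x"
  using abs_cyc_form_eq_0[OF cyc_rel.comm02[of x a0 a1 a2]]
  by (simp add: dform_def abs_cyc_form_ops)

(* x da y db, normalised by da y = d(ay) - a dy *)
definition tr :: "'a::ring_1 \<Rightarrow> 'a \<Rightarrow> 'a \<Rightarrow> 'a \<Rightarrow> 'a cyc_form" where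
  "tr x a y b = dform x (a * y) b - dform (x * a) y b"

lemma tr_additive:
  "additive (\<lambda>x. tr x a y b)" "additive (\<lambda>a. tr x a y b)"
  "additive (\<lambda>y. tr x a y b)" "additive (\<lambda>b. tr x a y b)"
  by (rule additive.intro; simp add: tr_def dform_add algebra_simps)+

lemmas tr_add = tr_additive[THEN additive.add]
lemmas tr_minus = tr_additive[THEN additive.minus]
lemmas tr_diff = tr_additive[THEN additive.diff]
lemmas tr_zero = tr_additive[THEN additive.zero]

lemma tr_one: "tr x 1 y b = 0" "tr x a y 1 = 0"
  by (simp_all add: tr_def dform_one)

lemma tr_mult_left: "tr x (a * c) y b = tr x a (c * y) b + tr (x * a) c y b"
  by (simp add: tr_def mult.assoc)

lemma tr_mult_right: "tr x a y (b * c) = tr x a (y * b) c + tr (c * x) a y b"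
  using dform_commute_left[of c x "a * y" b] dform_commute_left[of c "x * a" y b]
  by (simp add: tr_def mult.assoc algebra_simps)

lemma tr_swap: "tr x a y b = - tr y b x a"
  using abs_cyc_form_eq_0[OF cyc_rel.comm11[of x a y b]]
  by (simp add: tr_def dform_def abs_cyc_form_ops algebra_simps)

lemma tr_inverse_left:
  assumes "u * v = 1" and "v * u = 1"
  shows "tr x u y b = - tr (x * u) v (u * y) b"
proof -
  have cancel: "x * u * v = x" using assms by (simp add: mult.assoc)
  have "tr x u y b = tr x (u * (v * u)) y b" using assms by simp
  also have "\<dots> = tr x u (v * u * y) b + (tr (x * u) v (u * y) b + tr (x * u * v) u y b)"
    unfolding tr_mult_left ..
  also have "\<dots> = tr x u y b + tr (x * u) v (u * y) b + tr x u y b"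
    using assms cancel by (simp add: add.assoc)
  finally show ?thesis by (simp add: eq_neg_iff_add_eq_0)
qed

lemma tr_inverse_right:
  assumes "u * v = 1" and "v * u = 1"
  shows "tr x a y u = - tr (u * x) a (y * u) v"
proof -
  have "tr x a y u = - tr y u x a" by (rule tr_swap)
  also have "tr y u x a = - tr (y * u) v (u * x) a" using assms by (rule tr_inverse_left)
  also have "tr (y * u) v (u * x) a = - tr (u * x) a (y * u) v" by (rule tr_swap)
  finally show ?thesis by simp
qed

lemma uinv_eqI:
  assumes "x * y = 1" and "y * x = 1"
  shows "uinv x = y"
proof -
  have inv: "x * uinv x = 1" "uinv x * x = 1"
    using someI[of "\<lambda>z. x * z = 1 \<and> z * x = 1"] assms unfolding uinv_def by blast+
  have "uinv x = uinv x * (x * y)" using assms by simp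
  also have "\<dots> = y" using inv by (simp add: mult.assoc[symmetric])
  finally show ?thesis .
qed

lemma invertible_uinv: "invertible x \<Longrightarrow> x * uinv x = 1 \<and> uinv x * x = 1"
  unfolding invertible_def uinv_def by (rule someI_ex)

definition curly_form :: "'a::ring_1 \<Rightarrow> 'a \<Rightarrow> 'a cyc_form" where
  "curly_form a b = abs_cyc_form (curly a b)"

lemma curly_form_eq_tr:
  assumes "a * a' = 1" "a' * a = 1" "b * b' = 1" "b' * b = 1"
  shows "curly_form a b = tr (b' * a') a 1 b"
  using dform_commute_left[of "b' * a'" 1 a b] assms
  by (simp add: curly_form_def curly_def dd_times_def tr_def dform_one uinv_eqI
      abs_cyc_form_ops dform_def[symmetric])

locale two_by_two_move =
  fixes a1 a2 a3 a4 i1 i2 i3 i4 u :: "'a::ring_1"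
  assumes inverse1: "a1 * i1 = 1" "i1 * a1 = 1"
    and inverse2: "a2 * i2 = 1" "i2 * a2 = 1"
    and inverse3: "a3 * i3 = 1" "i3 * a3 = 1"
    and inverse4: "a4 * i4 = 1" "i4 * a4 = 1"
    and inverse_u: "u * (1 + a1 * a2 * a3 * a4) = 1" "(1 + a1 * a2 * a3 * a4) * u = 1"
begin

lemma cancel:
  "a1 * (i1 * w) = w" "i1 * (a1 * w) = w" "a2 * (i2 * w) = w" "i2 * (a2 * w) = w"
  "a3 * (i3 * w) = w" "i3 * (a3 * w) = w" "a4 * (i4 * w) = w" "i4 * (a4 * w) = w"
  using inverse1 inverse2 inverse3 inverse4 by (simp_all flip: mult.assoc)

lemma u_cycle: "u * (a1 * (a2 * (a3 * a4))) = 1 - u" "a1 * (a2 * (a3 * (a4 * u))) = 1 - u"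
  using inverse_u by (simp_all add: algebra_simps)

lemma u_cycle_inverse:
  "u * (i4 * (i3 * (i2 * i1))) = i4 * (i3 * (i2 * i1)) - u"
  "i4 * (i3 * (i2 * (i1 * u))) = i4 * (i3 * (i2 * i1)) - u"
proof -
  have "u * (i4 * (i3 * (i2 * i1))) + u = u * (1 + a1 * a2 * a3 * a4) * (i4 * (i3 * (i2 * i1)))"
    by (simp add: algebra_simps cancel inverse1)
  then show "u * (i4 * (i3 * (i2 * i1))) = i4 * (i3 * (i2 * i1)) - u"
    by (simp add: inverse_u eq_diff_eq)
  have "i4 * (i3 * (i2 * (i1 * u))) + u = (i4 * (i3 * (i2 * i1))) * ((1 + a1 * a2 * a3 * a4) * u)"
    by (simp add: algebra_simps cancel inverse4)
  then show "i4 * (i3 * (i2 * (i1 * u))) = i4 * (i3 * (i2 * i1)) - u"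
    by (simp add: inverse_u eq_diff_eq)
qed

(* Consequences of u A_1 = 1 - u which, as rewrite rules, normalise words in a_k, i_k and u. *)
lemma u_reduce:
  "u * (a1 * (a2 * (a3 * w))) = i4 * w - u * (i4 * w)"
  "u * (i4 * (i3 * w)) = i4 * (i3 * w) - u * (a1 * (a2 * w))"
  "a2 * (a3 * (a4 * (u * w))) = i1 * w - i1 * (u * w)"
  "i2 * (i1 * (u * w)) = i2 * (i1 * w) - a3 * (a4 * (u * w))"
proof -
  have "u * (a1 * (a2 * (a3 * w))) = (u * (a1 * (a2 * (a3 * a4)))) * (i4 * w)"
    by (simp add: mult.assoc cancel)
  then show "u * (a1 * (a2 * (a3 * w))) = i4 * w - u * (i4 * w)"
    by (simp add: u_cycle algebra_simps)
  have "u * (i4 * (i3 * w)) = (u * (i4 * (i3 * (i2 * i1)))) * (a1 * (a2 * w))"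
    by (simp add: mult.assoc cancel)
  then show "u * (i4 * (i3 * w)) = i4 * (i3 * w) - u * (a1 * (a2 * w))"
    by (simp add: u_cycle_inverse algebra_simps cancel)
  have "a2 * (a3 * (a4 * (u * w))) = i1 * ((a1 * (a2 * (a3 * (a4 * u)))) * w)"
    by (simp add: mult.assoc cancel)
  then show "a2 * (a3 * (a4 * (u * w))) = i1 * w - i1 * (u * w)"
    by (simp add: u_cycle algebra_simps)
  have "i2 * (i1 * (u * w)) = a3 * (a4 * ((i4 * (i3 * (i2 * (i1 * u)))) * w))"
    by (simp add: mult.assoc cancel)
  then show "i2 * (i1 * (u * w)) = i2 * (i1 * w) - a3 * (a4 * (u * w))"
    by (simp add: u_cycle_inverse algebra_simps cancel)
qed

lemmas u_reduce_end = u_reduce[where w = 1, simplified]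

lemmas word_simps = mult.assoc distrib_left distrib_right left_diff_distrib right_diff_distrib
  inverse1 inverse2 inverse3 inverse4 cancel u_reduce u_reduce_end

definition b1 :: 'a where "b1 = a3 + i2 * i1 * i4"
definition b2 :: 'a where "b2 = a4 * u"
definition b3 :: 'a where "b3 = a1 + i4 * i3 * i2"
definition b4 :: 'a where "b4 = i1 * u * a1 * a2"

lemma coordinates:
  "(1 + uinv (a3 * a4 * a1 * a2)) * a3 = b1"
  "uinv (1 + a4 * a1 * a2 * a3) * a4 = b2"
  "(1 + uinv (a1 * a2 * a3 * a4)) * a1 = b3"
  "uinv (1 + a2 * a3 * a4 * a1) * a2 = b4"
proof -
  have "uinv (a3 * a4 * a1 * a2) = i2 * i1 * i4 * i3"
    by (rule uinv_eqI) (simp_all add: word_simps)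
  then show "(1 + uinv (a3 * a4 * a1 * a2)) * a3 = b1" by (simp add: b1_def word_simps)
  have "uinv (1 + a4 * a1 * a2 * a3) = a4 * u * i4"
    by (rule uinv_eqI) (simp_all add: word_simps)
  then show "uinv (1 + a4 * a1 * a2 * a3) * a4 = b2" by (simp add: b2_def word_simps)
  have "uinv (a1 * a2 * a3 * a4) = i4 * i3 * i2 * i1"
    by (rule uinv_eqI) (simp_all add: word_simps)
  then show "(1 + uinv (a1 * a2 * a3 * a4)) * a1 = b3" by (simp add: b3_def word_simps)
  have "uinv (1 + a2 * a3 * a4 * a1) = i1 * u * a1"
    by (rule uinv_eqI) (simp_all add: word_simps)
  then show "uinv (1 + a2 * a3 * a4 * a1) * a2 = b4" by (simp add: b4_def word_simps)
qed

lemma inverse_coordinates: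
  "b1 * (a4 * u * a1 * a2) = 1" "(a4 * u * a1 * a2) * b1 = 1"
  "b2 * (i4 + a1 * a2 * a3) = 1" "(i4 + a1 * a2 * a3) * b2 = 1"
  "b3 * (i1 - i1 * u) = 1" "(i1 - i1 * u) * b3 = 1"
  "b4 * (i2 + a3 * a4 * a1) = 1" "(i2 + a3 * a4 * a1) * b4 = 1"
  by (simp_all add: b1_def b2_def b3_def b4_def word_simps)

(* Differentials end up on the a_k only, and tr_swap puts the smaller index first. *)
lemmas tr_simps = tr_add tr_minus tr_diff tr_zero tr_one tr_mult_left tr_mult_right
  tr_inverse_left[OF inverse1(2,1)] tr_inverse_left[OF inverse2(2,1)]
  tr_inverse_left[OF inverse3(2,1)] tr_inverse_left[OF inverse4(2,1)]
  tr_inverse_right[OF inverse1(2,1)] tr_inverse_right[OF inverse2(2,1)]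
  tr_inverse_right[OF inverse3(2,1)] tr_inverse_right[OF inverse4(2,1)]
  tr_inverse_left[OF inverse_u] tr_inverse_right[OF inverse_u]
  tr_swap[of _ a2 _ a1] tr_swap[of _ a3 _ a1] tr_swap[of _ a4 _ a1]
  tr_swap[of _ a3 _ a2] tr_swap[of _ a4 _ a2] tr_swap[of _ a4 _ a3]

lemma curly_form_invariant:
  "curly_form a4 a1 - curly_form a1 a2 + curly_form a2 a3 - curly_form a3 a4 =
   curly_form b1 b2 - curly_form b2 b3 + curly_form b3 b4 - curly_form b4 b1"
proof -
  have "curly_form b1 b2 - curly_form b2 b3 + curly_form b3 b4 - curly_form b4 b1 =
    tr ((i4 + a1 * a2 * a3) * (a4 * u * a1 * a2)) b1 1 b2
    - tr ((i1 - i1 * u) * (i4 + a1 * a2 * a3)) b2 1 b3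
    + tr ((i2 + a3 * a4 * a1) * (i1 - i1 * u)) b3 1 b4
    - tr ((a4 * u * a1 * a2) * (i2 + a3 * a4 * a1)) b4 1 b1"
    by (simp add: curly_form_eq_tr[OF inverse_coordinates(1-4)]
        curly_form_eq_tr[OF inverse_coordinates(3-6)] curly_form_eq_tr[OF inverse_coordinates(5-8)]
        curly_form_eq_tr[OF inverse_coordinates(7,8,1,2)])
  also have "\<dots> = tr (i1 * i4) a4 1 a1 - tr (i2 * i1) a1 1 a2 + tr (i3 * i2) a2 1 a3
    - tr (i4 * i3) a3 1 a4"
    by (simp add: b1_def b2_def b3_def b4_def word_simps tr_simps)
  also have "\<dots> = curly_form a4 a1 - curly_form a1 a2 + curly_form a2 a3 - curly_form a3 a4"
    by (simp add: curly_form_eq_tr[OF inverse4 inverse1] curly_form_eq_tr[OF inverse1 inverse2]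
        curly_form_eq_tr[OF inverse2 inverse3] curly_form_eq_tr[OF inverse3 inverse4])
  finally show ?thesis ..
qed

end

theorem theorem4p12:
  fixes a1 a2 a3 a4 :: "'a::ring_1"
  defines "A1 \<equiv> a1 * a2 * a3 * a4"
      and "A2 \<equiv> a2 * a3 * a4 * a1"
      and "A3 \<equiv> a3 * a4 * a1 * a2"
      and "A4 \<equiv> a4 * a1 * a2 * a3"
  defines "b1 \<equiv> (1 + uinv A3) * a3"
      and "b2 \<equiv> uinv (1 + A4) * a4"
      and "b3 \<equiv> (1 + uinv A1) * a1"
      and "b4 \<equiv> uinv (1 + A2) * a2"
  assumes "invertible a1" and "invertible a2" and "invertible a3" and "invertible a4"
      and "invertible (1 + A1)" and "invertible (1 + A2)"
      and "invertible (1 + A3)" and "invertible (1 + A4)"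
  shows "cyc_eq (curly a4 a1 - curly a1 a2 + curly a2 a3 - curly a3 a4)
                (curly b1 b2 - curly b2 b3 + curly b3 b4 - curly b4 b1)"
proof -
  (* 1 + A2, 1 + A3, 1 + A4 are conjugate to 1 + A1, so only the inverse of 1 + A1 is used. *)
  interpret move: two_by_two_move a1 a2 a3 a4 "uinv a1" "uinv a2" "uinv a3" "uinv a4"
    "uinv (1 + A1)"
    by unfold_locales (simp_all add: invertible_uinv assms(9-13) flip: A1_def)
  have "b1 = move.b1" "b2 = move.b2" "b3 = move.b3" "b4 = move.b4"
    using move.coordinates
    by (simp_all add: b1_def b2_def b3_def b4_def A1_def A2_def A3_def A4_def)
  then show ?thesis
    using move.curly_form_invariant
    by (simp add: curly_form_def abs_cyc_form_ops flip: cyc_form.abs_eq_iff)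
qed

end
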